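(* Let $N$ be a phylogenetic network with $k$ reticulations at the top. Then there is a sequence of at most $k$ valid head moves transforming $N$ into a network with $k$ reticulations neatly at the top, such that the part of the network below the nodes $a_k$ and $b_k$ is not altered.
   Context: A (binary) phylogenetic network on a finite label set $X$ ($|X|\ge 2$) is a directed acyclic graph without parallel edges having exactly one root (indegree 0, outdegree 1), exactly $|X|$ leaves (indegree 1, outdegree 0) bijectively labelled by $X$, and all other nodes are either split nodes (indegree 1, outdegree 2) or reticulations (indegree 2, outdegree 1). A network has $k$ reticulations at the top if it contains: the child $c$ of the root; nodes $a_i,b_i$ and an edge $(a_i,b_i)$ for each $i\in\{1,\dots,k\}$; edges $(c,a_1)$ and $(c,b_1)$; and for each $i\in\{1,\dots,k-1\}$ either the edges $(a_i,a_{i+1})$ and $(b_i,b_{i+1})$, or the edges $(a_i,b_{i+1})$ and $(b_i,a_{i+1})$. It has $k$ reticulations neatly at the top if moreover for every $i\in\{1,\dots,k-1\}$ the edges $(a_i,a_{i+1})$ and $(b_i,b_{i+1})$ are present. Subdividing an edge $(a,b)$ means replacing it by a new node $x$ and edges $(a,x),(x,b)$; suppressing an indegree-1 outdegree-1 node $x$ with parent $a$ and child $b$ means deleting $x$ and its edges and adding $(a,b)$. Head move of $(u,v)$ ($v$ a reticulation) to an edge $f$: delete $(u,v)$, subdivide $f$ with new node $v'$, suppress $v$, add $(u,v')$; valid only if the result is a phylogenetic network. *)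

theory Defs
  imports Main
begin

text \<open>A network is represented by its (finite) set of directed edges; its nodes are the
endpoints of edges (every node of a phylogenetic network with at least two leaves is
incident to some edge).\<close>

definition verts :: "('v \<times> 'v) set \<Rightarrow> 'v set" where
  "verts E = fst ` E \<union> snd ` E"

definition indeg :: "('v \<times> 'v) set \<Rightarrow> 'v \<Rightarrow> nat" where
  "indeg E v = card {u. (u, v) \<in> E}"

definition outdeg :: "('v \<times> 'v) set \<Rightarrow> 'v \<Rightarrow> nat" where
  "outdeg E v = card {w. (v, w) \<in> E}"

definition is_root :: "('v \<times> 'v) set \<Rightarrow> 'v \<Rightarrow> bool" where
  "is_root E v \<longleftrightarrow> v \<in> verts E \<and> indeg E v = 0 \<and> outdeg E v = 1"

definition is_leaf :: "('v \<times> 'v) set \<Rightarrow> 'v \<Rightarrow> bool" where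
  "is_leaf E v \<longleftrightarrow> v \<in> verts E \<and> indeg E v = 1 \<and> outdeg E v = 0"

definition is_split :: "('v \<times> 'v) set \<Rightarrow> 'v \<Rightarrow> bool" where
  "is_split E v \<longleftrightarrow> v \<in> verts E \<and> indeg E v = 1 \<and> outdeg E v = 2"

definition is_ret :: "('v \<times> 'v) set \<Rightarrow> 'v \<Rightarrow> bool" where
  "is_ret E v \<longleftrightarrow> v \<in> verts E \<and> indeg E v = 2 \<and> outdeg E v = 1"

definition phylo_net :: "'x set \<Rightarrow> ('v \<Rightarrow> 'x) \<Rightarrow> ('v \<times> 'v) set \<Rightarrow> bool" where
  "phylo_net X lab E \<longleftrightarrow>
     finite E \<and> finite X \<and> card X \<ge> 2 \<and> acyclic E \<and>
     card {v. is_root E v} = 1 \<and>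
     (\<forall>v \<in> verts E. is_root E v \<or> is_leaf E v \<or> is_split E v \<or> is_ret E v) \<and>
     bij_betw lab {v. is_leaf E v} X"

text \<open>Head move of (u,v) to f = (x,y), using new node v'. p and c are the (unique)
parent and child of v after deleting (u,v) and subdividing f; v is then suppressed.
The move is literal: delete (u,v); subdivide f with v'; suppress v; add (u,v').
Parallel edges must not arise.\<close>
definition head_move :: "('v \<times> 'v) set \<Rightarrow> ('v \<times> 'v) set \<Rightarrow> bool" where
  "head_move E E' \<longleftrightarrow>
    (\<exists>u v x y v' p c.
       (u, v) \<in> E \<and> is_ret E v \<and> (x, y) \<in> E - {(u, v)} \<and>
       v' \<notin> verts (E - {(u, v)}) \<and>
       (let E1 = E - {(u, v)};
            E2 = (E1 - {(x, y)}) \<union> {(x, v'), (v', y)}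
        in {w. (w, v) \<in> E2} = {p} \<and> {w. (v, w) \<in> E2} = {c} \<and>
           (let E3 = (E2 - {(p, v), (v, c)})
            in (p, c) \<notin> E3 \<and> (u, v') \<notin> E3 \<and>
               E' = E3 \<union> {(p, c)} \<union> {(u, v')})))"

definition valid_head_move :: "'x set \<Rightarrow> ('v \<Rightarrow> 'x) \<Rightarrow> ('v \<times> 'v) set \<Rightarrow> ('v \<times> 'v) set \<Rightarrow> bool" where
  "valid_head_move X lab E E' \<longleftrightarrow> head_move E E' \<and> phylo_net X lab E'"

definition top_frame :: "('v \<times> 'v) set \<Rightarrow> nat \<Rightarrow> (nat \<Rightarrow> 'v) \<Rightarrow> (nat \<Rightarrow> 'v) \<Rightarrow> bool" where
  "top_frame E k a b \<longleftrightarrow>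
     (\<exists>r c. is_root E r \<and> (r, c) \<in> E \<and> (c, a 1) \<in> E \<and> (c, b 1) \<in> E \<and>
        inj_on a {1..k} \<and> inj_on b {1..k} \<and> a ` {1..k} \<inter> b ` {1..k} = {} \<and>
        c \<notin> a ` {1..k} \<and> c \<notin> b ` {1..k}) \<and>
     (\<forall>i \<in> {1..k}. (a i, b i) \<in> E)"

definition rets_at_top :: "('v \<times> 'v) set \<Rightarrow> nat \<Rightarrow> (nat \<Rightarrow> 'v) \<Rightarrow> (nat \<Rightarrow> 'v) \<Rightarrow> bool" where
  "rets_at_top E k a b \<longleftrightarrow> top_frame E k a b \<and>
     (\<forall>i \<in> {1..<k}. ((a i, a (i+1)) \<in> E \<and> (b i, b (i+1)) \<in> E) \<or>
                     ((a i, b (i+1)) \<in> E \<and> (b i, a (i+1)) \<in> E))"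

definition rets_neatly_at_top :: "('v \<times> 'v) set \<Rightarrow> nat \<Rightarrow> (nat \<Rightarrow> 'v) \<Rightarrow> (nat \<Rightarrow> 'v) \<Rightarrow> bool" where
  "rets_neatly_at_top E k a b \<longleftrightarrow> top_frame E k a b \<and>
     (\<forall>i \<in> {1..<k}. (a i, a (i+1)) \<in> E \<and> (b i, b (i+1)) \<in> E)"

definition below :: "('v \<times> 'v) set \<Rightarrow> 'v \<Rightarrow> 'v \<Rightarrow> 'v set" where
  "below E x y = {w. (x, w) \<in> E\<^sup>+ \<or> (y, w) \<in> E\<^sup>+} - {x, y}"

end

theory Submission
  imports Defs
begin

text \<open>Call level j of the ladder crossed if its edges are (a_j, b_(j+1)) and (b_j, a_(j+1)).
  At a crossed level i the reticulation b_i has the parents a_i and some node p higher up in the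
  ladder. Moving the head of (p, b_i) onto the edge (a_i, b_(i+1)) creates a new reticulation, which
  takes the place of b_i, and suppresses the old b_i into the edge (a_i, a_(i+1)); this straightens
  level i and leaves every other level straight or crossed as before. Hence at most k - 1 head moves
  straighten the whole ladder. All edges that change leave nodes of the ladder above a_k and b_k,
  a set closed under taking parents, so no edge leaving a descendant of a_k or b_k is affected.\<close>

abbreviation preds :: "('v \<times> 'v) set \<Rightarrow> 'v \<Rightarrow> 'v set" where
  "preds E w \<equiv> {u. (u, w) \<in> E}"

abbreviation succs :: "('v \<times> 'v) set \<Rightarrow> 'v \<Rightarrow> 'v set" where
  "succs E w \<equiv> {u. (w, u) \<in> E}"

lemma finite_preds: "finite E \<Longrightarrow> finite (preds E w)"
  by (rule finite_subset[of _ "fst ` E"]) force+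

lemma finite_succs: "finite E \<Longrightarrow> finite (succs E w)"
  by (rule finite_subset[of _ "snd ` E"]) force+

lemma edge_in_verts: "(u, w) \<in> E \<Longrightarrow> u \<in> verts E \<and> w \<in> verts E"
  unfolding verts_def by force

lemma in_verts_iff_degree: "finite E \<Longrightarrow> w \<in> verts E \<longleftrightarrow> indeg E w \<noteq> 0 \<or> outdeg E w \<noteq> 0"
proof -
  assume fin: "finite E"
  have "w \<in> verts E \<longleftrightarrow> preds E w \<noteq> {} \<or> succs E w \<noteq> {}"
    unfolding verts_def by force
  with finite_preds[OF fin, of w] finite_succs[OF fin, of w] show ?thesis
    unfolding indeg_def outdeg_def by auto
qed

lemma no_pred_if_indeg_zero: "finite E \<Longrightarrow> indeg E w = 0 \<Longrightarrow> (u, w) \<notin> E"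
  using finite_preds[of E w] unfolding indeg_def by auto

lemma preds_eq_if_indeg_one:
  assumes "indeg E w = 1" "(u, w) \<in> E" shows "preds E w = {u}"
proof -
  obtain z where "preds E w = {z}" using assms(1) unfolding indeg_def by (rule card_1_singletonE)
  with assms(2) show ?thesis by auto
qed

lemma succs_eq_if_outdeg_one:
  assumes "outdeg E w = 1" "(w, u) \<in> E" shows "succs E w = {u}"
proof -
  obtain z where "succs E w = {z}" using assms(1) unfolding outdeg_def by (rule card_1_singletonE)
  with assms(2) show ?thesis by auto
qed

lemma phylo_net_finite: "phylo_net X lab E \<Longrightarrow> finite E"
  and phylo_net_acyclic: "phylo_net X lab E \<Longrightarrow> acyclic E"
  unfolding phylo_net_def by blast+

lemma phylo_net_degrees:
  assumes "phylo_net X lab E" "w \<in> verts E"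
  shows "(indeg E w = 0 \<and> outdeg E w = 1) \<or> (indeg E w = 1 \<and> outdeg E w = 0) \<or>
    (indeg E w = 1 \<and> outdeg E w = 2) \<or> (indeg E w = 2 \<and> outdeg E w = 1)"
  using assms unfolding phylo_net_def is_root_def is_leaf_def is_split_def is_ret_def by blast

lemma root_has_no_pred:
  assumes "phylo_net X lab E" "is_root E r" shows "(u, r) \<notin> E"
  using assms(2) no_pred_if_indeg_zero[OF phylo_net_finite[OF assms(1)]] unfolding is_root_def by blast

lemma two_children_split:
  assumes net: "phylo_net X lab E" and "(w, u1) \<in> E" "(w, u2) \<in> E" "u1 \<noteq> u2"
  shows "indeg E w = 1 \<and> succs E w = {u1, u2}"
proof -
  have fin: "finite (succs E w)" by (rule finite_succs[OF phylo_net_finite[OF net]])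
  have sub: "{u1, u2} \<subseteq> succs E w" using assms by auto
  have "2 \<le> outdeg E w" unfolding outdeg_def using card_mono[OF fin sub] assms(4) by simp
  with phylo_net_degrees[OF net conjunct1[OF edge_in_verts[OF assms(2)]]]
  have deg: "indeg E w = 1" "outdeg E w = 2" by auto
  have "succs E w = {u1, u2}"
    using card_subset_eq[OF fin sub] deg(2) assms(4) unfolding outdeg_def by simp
  with deg(1) show ?thesis by simp
qed

lemma two_parents_ret:
  assumes net: "phylo_net X lab E" and "(u1, w) \<in> E" "(u2, w) \<in> E" "u1 \<noteq> u2"
  shows "outdeg E w = 1 \<and> preds E w = {u1, u2}"
proof -
  have fin: "finite (preds E w)" by (rule finite_preds[OF phylo_net_finite[OF net]])
  have sub: "{u1, u2} \<subseteq> preds E w" using assms by auto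
  have "2 \<le> indeg E w" unfolding indeg_def using card_mono[OF fin sub] assms(4) by simp
  with phylo_net_degrees[OF net conjunct2[OF edge_in_verts[OF assms(2)]]]
  have deg: "indeg E w = 2" "outdeg E w = 1" by auto
  have "preds E w = {u1, u2}"
    using card_subset_eq[OF fin sub] deg(1) assms(4) unfolding indeg_def by simp
  with deg(2) show ?thesis by simp
qed

lemma card_insert_remove_eq:
  "finite S \<Longrightarrow> t \<in> S \<Longrightarrow> u \<notin> S \<Longrightarrow> card (insert u (S - {t})) = card S"
  using card.remove[of S t] card_insert_disjoint[of "S - {t}" u] by auto

lemma acyclic_if_edges_map_to_paths:
  assumes "acyclic E" and "\<And>s t. (s, t) \<in> E' \<Longrightarrow> (f s, f t) \<in> E\<^sup>+"
  shows "acyclic E'"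
proof -
  have path: "(f s, f t) \<in> E\<^sup>+" if "(s, t) \<in> E'\<^sup>+" for s t
    using that
  proof induction
    case (step t u)
    from step.IH assms(2)[OF step.hyps(2)] show ?case by (rule trancl_trans)
  qed (rule assms(2))
  show ?thesis unfolding acyclic_def
  proof (intro allI notI)
    fix s assume "(s, s) \<in> E'\<^sup>+"
    from path[OF this] assms(1) show False unfolding acyclic_def by simp
  qed
qed

lemma rtrancl_Image_eq_if_out_edges_eq:
  assumes "{e \<in> E'. fst e \<in> E\<^sup>* `` S} = {e \<in> E. fst e \<in> E\<^sup>* `` S}"
  shows "E'\<^sup>* `` S = E\<^sup>* `` S"
proof -
  have same_edge: "(u, w) \<in> E' \<longleftrightarrow> (u, w) \<in> E" if "u \<in> E\<^sup>* `` S" for u w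
    using that assms by (simp add: set_eq_iff) (metis fst_conv)
  have "w \<in> E\<^sup>* `` S" if "(s, w) \<in> E'\<^sup>*" "s \<in> S" for s w
    using that(1)
  proof (induction rule: rtrancl_induct)
    case base show ?case using that(2) by blast
  next
    case (step w z)
    then obtain s' where "s' \<in> S" "(s', w) \<in> E\<^sup>*" by blast
    moreover have "(w, z) \<in> E" using step same_edge by blast
    ultimately show ?case by (blast intro: rtrancl_into_rtrancl)
  qed
  moreover have "w \<in> E'\<^sup>* `` S" if "(s, w) \<in> E\<^sup>*" "s \<in> S" for s w
    using that(1)
  proof (induction rule: rtrancl_induct)
    case base show ?case using that(2) by blast
  next
    case (step w z)
    have "w \<in> E\<^sup>* `` S" using step.hyps(1) that(2) by blast
    with step.hyps(2) have "(w, z) \<in> E'" using same_edge by blast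
    with step.IH show ?case by (blast intro: rtrancl_into_rtrancl)
  qed
  ultimately show ?thesis by blast
qed

lemma restrict_out_edges:
  assumes "{e \<in> F. fst e \<in> R} = {e \<in> G. fst e \<in> R}" "B \<subseteq> R"
  shows "{e \<in> F. fst e \<in> B} = {e \<in> G. fst e \<in> B}"
proof -
  have "{e \<in> F. fst e \<in> B} = {e \<in> {e \<in> F. fst e \<in> R}. fst e \<in> B}" using assms(2) by auto
  also have "\<dots> = {e \<in> {e \<in> G. fst e \<in> R}. fst e \<in> B}" using assms(1) by simp
  also have "\<dots> = {e \<in> G. fst e \<in> B}" using assms(2) by auto
  finally show ?thesis .
qed

section \<open>The ladder of reticulations at the top\<close>

definition straight :: "('v \<times> 'v) set \<Rightarrow> (nat \<Rightarrow> 'v) \<Rightarrow> (nat \<Rightarrow> 'v) \<Rightarrow> nat \<Rightarrow> bool" where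
  "straight E a b j \<longleftrightarrow> (a j, a (j + 1)) \<in> E \<and> (b j, b (j + 1)) \<in> E"

definition crossed :: "('v \<times> 'v) set \<Rightarrow> (nat \<Rightarrow> 'v) \<Rightarrow> (nat \<Rightarrow> 'v) \<Rightarrow> nat \<Rightarrow> bool" where
  "crossed E a b j \<longleftrightarrow> (a j, b (j + 1)) \<in> E \<and> (b j, a (j + 1)) \<in> E"

definition ladder :: "('v \<times> 'v) set \<Rightarrow> nat \<Rightarrow> (nat \<Rightarrow> 'v) \<Rightarrow> (nat \<Rightarrow> 'v) \<Rightarrow> 'v \<Rightarrow> 'v \<Rightarrow> bool"
  where "ladder E k a b r c \<longleftrightarrow>
    is_root E r \<and> (r, c) \<in> E \<and> (c, a 1) \<in> E \<and> (c, b 1) \<in> E \<and>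
    inj_on a {1..k} \<and> inj_on b {1..k} \<and> a ` {1..k} \<inter> b ` {1..k} = {} \<and>
    c \<notin> a ` {1..k} \<and> c \<notin> b ` {1..k} \<and>
    (\<forall>j\<in>{1..k}. (a j, b j) \<in> E) \<and> (\<forall>j\<in>{1..<k}. straight E a b j \<or> crossed E a b j)"

lemma ladderD:
  assumes "ladder E k a b r c"
  shows "is_root E r" "(r, c) \<in> E" "(c, a 1) \<in> E" "(c, b 1) \<in> E"
    "inj_on a {1..k}" "inj_on b {1..k}" "a ` {1..k} \<inter> b ` {1..k} = {}"
    "c \<notin> a ` {1..k}" "c \<notin> b ` {1..k}"
    "\<And>j. j \<in> {1..k} \<Longrightarrow> (a j, b j) \<in> E"
    "\<And>j. j \<in> {1..<k} \<Longrightarrow> straight E a b j \<or> crossed E a b j"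
  using assms unfolding ladder_def by blast+

lemma rets_at_top_iff_ladder: "rets_at_top E k a b \<longleftrightarrow> (\<exists>r c. ladder E k a b r c)"
  unfolding rets_at_top_def top_frame_def ladder_def straight_def crossed_def by blast

lemma rets_neatly_at_top_if_straight:
  "ladder E k a b r c \<Longrightarrow> \<forall>j\<in>{1..<k}. straight E a b j \<Longrightarrow> rets_neatly_at_top E k a b"
  unfolding rets_neatly_at_top_def top_frame_def ladder_def straight_def by blast

lemma ladder_distinct:
  assumes "ladder E k a b r c" "i \<in> {1..k}" "j \<in> {1..k}"
  shows "a i = a j \<longleftrightarrow> i = j" "b i = b j \<longleftrightarrow> i = j" "a i \<noteq> b j" "c \<noteq> a i" "c \<noteq> b i"
  using ladderD(5-9)[OF assms(1)] assms(2,3) unfolding inj_on_def by blast+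

definition above_rung :: "'v \<Rightarrow> (nat \<Rightarrow> 'v) \<Rightarrow> (nat \<Rightarrow> 'v) \<Rightarrow> nat \<Rightarrow> 'v set" where
  "above_rung c a b j = insert c (a ` {1..<j} \<union> b ` {1..<j})"

lemma above_rung_mono: "j \<le> k \<Longrightarrow> above_rung c a b j \<subseteq> above_rung c a b k"
  unfolding above_rung_def by auto

lemma ladder_not_above:
  assumes "ladder E k a b r c" "j \<in> {1..k}"
  shows "a j \<notin> above_rung c a b j" "b j \<notin> above_rung c a b j"
proof -
  have "a j \<noteq> a m \<and> a j \<noteq> b m \<and> b j \<noteq> a m \<and> b j \<noteq> b m" if "m \<in> {1..<j}" for m
  proof -
    have m: "m \<in> {1..k}" "m \<noteq> j" using that assms(2) by auto
    show ?thesis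
      using ladder_distinct(1,2)[OF assms(1) assms(2) m(1)] ladder_distinct(3)[OF assms(1) m(1) assms(2)]
        ladder_distinct(3)[OF assms(1) assms(2) m(1)] m(2) by auto
  qed
  moreover have "a j \<noteq> c" "b j \<noteq> c" using ladder_distinct(4,5)[OF assms(1) assms(2) assms(2)] by auto
  ultimately show "a j \<notin> above_rung c a b j" "b j \<notin> above_rung c a b j"
    unfolding above_rung_def by blast+
qed

lemma ladder_parents_above:
  assumes "ladder E k a b r c" "j \<in> {1..k}"
  shows "\<exists>q \<in> above_rung c a b j. (q, a j) \<in> E" "\<exists>q \<in> above_rung c a b j. (q, b j) \<in> E"
proof -
  note L = ladderD[OF assms(1)]
  have "(\<exists>q \<in> above_rung c a b j. (q, a j) \<in> E) \<and> (\<exists>q \<in> above_rung c a b j. (q, b j) \<in> E)"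
  proof (cases "j = 1")
    case True
    with L(3,4) show ?thesis unfolding above_rung_def by blast
  next
    case False
    then have j: "j - 1 \<in> {1..<k}" "j - 1 + 1 = j" using assms(2) by auto
    have "a (j - 1) \<in> above_rung c a b j" "b (j - 1) \<in> above_rung c a b j"
      unfolding above_rung_def using False assms(2) by auto
    with L(11)[OF j(1)] show ?thesis unfolding straight_def crossed_def j(2) by blast
  qed
  then show "\<exists>q \<in> above_rung c a b j. (q, a j) \<in> E" "\<exists>q \<in> above_rung c a b j. (q, b j) \<in> E"
    by blast+
qed

lemma ladder_top_closed_under_preds:
  assumes net: "phylo_net X lab E" and lad: "ladder E k a b r c" and "1 \<le> k"
    and w: "w \<in> insert r (above_rung c a b k)" and e: "(u, w) \<in> E"
  shows "u \<in> insert r (above_rung c a b k)"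
proof -
  note L = ladderD[OF lad]
  have one: "1 \<in> {1..k}" using \<open>1 \<le> k\<close> by simp
  consider "w = r" | "w = c" | j where "j \<in> {1..<k}" "w = a j" | j where "j \<in> {1..<k}" "w = b j"
    using w unfolding above_rung_def by blast
  then show ?thesis
  proof cases
    case 1
    with root_has_no_pred[OF net L(1)] e show ?thesis by blast
  next
    case 2
    from two_children_split[OF net L(3,4) ladder_distinct(3)[OF lad one one]]
    have "preds E c = {r}" using preds_eq_if_indeg_one[OF _ L(2)] by blast
    with e 2 show ?thesis by blast
  next
    case 3
    then have j: "j \<in> {1..k}" "j + 1 \<in> {1..k}" by auto
    have "b (j + 1) \<noteq> b j" "a (j + 1) \<noteq> b j" using ladder_distinct(2,3)[OF lad j(2) j(1)] by auto
    then obtain n where n: "(a j, n) \<in> E" "b j \<noteq> n"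
      using L(11)[OF 3(1)] unfolding straight_def crossed_def by metis
    have "indeg E (a j) = 1" using two_children_split[OF net L(10)[OF j(1)] n] by blast
    moreover obtain q where q: "q \<in> above_rung c a b j" "(q, a j) \<in> E"
      using ladder_parents_above(1)[OF lad j(1)] by blast
    ultimately have "preds E (a j) = {q}" using preds_eq_if_indeg_one by metis
    with e 3(2) have "u = q" by blast
    with q(1) above_rung_mono[of j k c a b] 3(1) show ?thesis by auto
  next
    case 4
    then have j: "j \<in> {1..k}" by auto
    obtain q where q: "q \<in> above_rung c a b j" "(q, b j) \<in> E"
      using ladder_parents_above(2)[OF lad j] by blast
    have "q \<noteq> a j" using q(1) ladder_not_above(1)[OF lad j] by blast
    with two_parents_ret[OF net q(2) L(10)[OF j]] e 4(2) have "u = q \<or> u = a j" by blast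
    with q(1) above_rung_mono[of j k c a b] 4(1) show ?thesis unfolding above_rung_def by auto
  qed
qed

lemma ladder_top_closed_under_ancestors:
  assumes "phylo_net X lab E" "ladder E k a b r c" "1 \<le> k"
  shows "(u, w) \<in> E\<^sup>+ \<Longrightarrow> w \<in> insert r (above_rung c a b k) \<Longrightarrow> u \<in> insert r (above_rung c a b k)"
proof (induction rule: converse_trancl_induct)
  case (base u)
  then show ?case using ladder_top_closed_under_preds[OF assms] by blast
next
  case (step u v)
  then show ?case using ladder_top_closed_under_preds[OF assms] by blast
qed

lemma ladder_top_not_below_last_rung:
  assumes net: "phylo_net X lab E" and lad: "ladder E k a b r c" and "1 \<le> k"
    and w: "w \<in> insert r (above_rung c a b k)"
  shows "w \<notin> E\<^sup>* `` {a k, b k}"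
proof -
  have kk: "k \<in> {1..k}" using \<open>1 \<le> k\<close> by simp
  have "a k \<noteq> r" "b k \<noteq> r"
    using root_has_no_pred[OF net ladderD(1)[OF lad]] ladderD(10)[OF lad kk]
      ladder_parents_above(1)[OF lad kk] by blast+
  with ladder_not_above[OF lad kk]
  have last_rung: "a k \<notin> insert r (above_rung c a b k)" "b k \<notin> insert r (above_rung c a b k)"
    by auto
  show ?thesis
  proof
    assume "w \<in> E\<^sup>* `` {a k, b k}"
    then obtain s where s: "s \<in> {a k, b k}" "(s, w) \<in> E\<^sup>*" by blast
    then have "s \<in> insert r (above_rung c a b k)"
      using w ladder_top_closed_under_ancestors[OF assms(1-3)] by (auto simp: rtrancl_eq_or_trancl)
    with s(1) last_rung show False by blast
  qed
qed

section \<open>Uncrossing a rung by one head move\<close>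

text \<open>The head move of the edge (p, y) to the edge (x, n2), subdividing it by the new node v;
  the reticulation y, left with the single parent x, is suppressed into the edge (x, n1).\<close>

definition uncross :: "('v \<times> 'v) set \<Rightarrow> 'v \<Rightarrow> 'v \<Rightarrow> 'v \<Rightarrow> 'v \<Rightarrow> 'v \<Rightarrow> 'v \<Rightarrow> ('v \<times> 'v) set" where
  "uncross E p x y n1 n2 v =
     (E - {(p, y), (x, n2), (x, y), (y, n1)}) \<union> {(x, v), (v, n2), (x, n1), (p, v)}"

locale rung_uncrossing =
  fixes X :: "'x set" and lab :: "'v \<Rightarrow> 'x" and E :: "('v \<times> 'v) set"
    and p x y n1 n2 v :: 'v
  assumes net: "phylo_net X lab E"
    and edges: "(p, y) \<in> E" "(x, y) \<in> E" "(x, n2) \<in> E" "(y, n1) \<in> E"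
    and path: "(y, n2) \<in> E\<^sup>+"
    and distinct: "p \<noteq> x" "n1 \<noteq> n2"
    and fresh: "v \<notin> verts E"
begin

abbreviation E' :: "('v \<times> 'v) set" where
  "E' \<equiv> uncross E p x y n1 n2 v"

lemma path_distinct: "(u, w) \<in> E\<^sup>+ \<Longrightarrow> u \<noteq> w"
  using phylo_net_acyclic[OF net] unfolding acyclic_def by blast

lemma nodes_distinct:
  "x \<noteq> y" "y \<noteq> n1" "x \<noteq> n1" "x \<noteq> n2" "y \<noteq> n2" "p \<noteq> y" "p \<noteq> n1" "p \<noteq> n2"
proof -
  have "(x, n1) \<in> E\<^sup>+" using edges(2,4) by (rule trancl_into_trancl[OF r_into_trancl])
  moreover have "(p, n1) \<in> E\<^sup>+" using edges(1,4) by (rule trancl_into_trancl[OF r_into_trancl])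
  moreover have "(p, n2) \<in> E\<^sup>+" using r_into_trancl[OF edges(1)] path by (rule trancl_trans)
  ultimately show "x \<noteq> y" "y \<noteq> n1" "x \<noteq> n1" "x \<noteq> n2" "y \<noteq> n2" "p \<noteq> y" "p \<noteq> n1" "p \<noteq> n2"
    using r_into_trancl[OF edges(1)] r_into_trancl[OF edges(2)] r_into_trancl[OF edges(3)]
      r_into_trancl[OF edges(4)] path path_distinct by blast+
qed

lemma fresh_distinct: "v \<noteq> p" "v \<noteq> x" "v \<noteq> y" "v \<noteq> n1" "v \<noteq> n2"
  using fresh edge_in_verts[OF edges(1)] edge_in_verts[OF edges(3)] edge_in_verts[OF edges(4)] by auto

lemma fresh_no_edges: "(u, v) \<notin> E" "(v, u) \<notin> E"
  using fresh unfolding verts_def by force+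

lemma local_structure:
  "preds E y = {p, x}" "succs E y = {n1}" "indeg E y = 2" "succs E x = {y, n2}"
proof -
  have ret: "outdeg E y = 1 \<and> preds E y = {p, x}"
    by (rule two_parents_ret[OF net edges(1,2) distinct(1)])
  then show "preds E y = {p, x}" by (rule conjunct2)
  show "succs E y = {n1}" using succs_eq_if_outdeg_one[OF conjunct1[OF ret] edges(4)] .
  show "indeg E y = 2" unfolding indeg_def using ret distinct(1) by simp
  show "succs E x = {y, n2}"
    using two_children_split[OF net edges(2,3) nodes_distinct(5)] by (rule conjunct2)
qed

lemma local_edges:
  "(w, y) \<in> E \<longleftrightarrow> w = p \<or> w = x" "(y, w) \<in> E \<longleftrightarrow> w = n1" "(x, w) \<in> E \<longleftrightarrow> w = y \<or> w = n2"
  using local_structure by blast+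

lemma head_move: "head_move E E'"
  unfolding head_move_def Let_def
proof (rule exI[of _ p], rule exI[of _ y], rule exI[of _ x], rule exI[of _ n2], rule exI[of _ v],
    rule exI[of _ x], rule exI[of _ n1], intro conjI)
  note neq = nodes_distinct fresh_distinct distinct
  show "(p, y) \<in> E" by (rule edges(1))
  show "is_ret E y"
    unfolding is_ret_def outdeg_def using edge_in_verts[OF edges(2)] local_structure(2,3) by simp
  show "(x, n2) \<in> E - {(p, y)}" using edges(3) distinct(1) by simp
  show "v \<notin> verts (E - {(p, y)})" using fresh unfolding verts_def by auto
  show "{w. (w, y) \<in> E - {(p, y)} - {(x, n2)} \<union> {(x, v), (v, n2)}} = {x}"
    using local_edges(1) neq by auto
  show "{w. (y, w) \<in> E - {(p, y)} - {(x, n2)} \<union> {(x, v), (v, n2)}} = {n1}"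
    using local_edges(2) neq by auto
  show "(x, n1) \<notin> E - {(p, y)} - {(x, n2)} \<union> {(x, v), (v, n2)} - {(x, y), (y, n1)}"
    using local_edges(3) neq by auto
  show "(p, v) \<notin> E - {(p, y)} - {(x, n2)} \<union> {(x, v), (v, n2)} - {(x, y), (y, n1)}"
    using fresh_no_edges neq by auto
  show "E' = E - {(p, y)} - {(x, n2)} \<union> {(x, v), (v, n2)} - {(x, y), (y, n1)} \<union> {(x, n1)} \<union> {(p, v)}"
    unfolding uncross_def using neq by auto
qed


lemma preds_uncross:
  assumes "w \<noteq> v" "w \<noteq> y"
  shows "preds E' w = (if w = n2 then insert v (preds E n2 - {x})
    else if w = n1 then insert x (preds E n1 - {y}) else preds E w)"
  unfolding uncross_def using assms nodes_distinct fresh_distinct distinct by auto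

lemma succs_uncross:
  assumes "w \<noteq> v" "w \<noteq> y"
  shows "succs E' w = (if w = x then {v, n1}
    else if w = p then insert v (succs E p - {y}) else succs E w)"
  unfolding uncross_def using assms local_edges(3) nodes_distinct fresh_distinct distinct by auto

lemma degrees_uncross:
  assumes "w \<noteq> v" "w \<noteq> y"
  shows "indeg E' w = indeg E w" "outdeg E' w = outdeg E w"
proof -
  have fin: "finite E" by (rule phylo_net_finite[OF net])
  have "(x, n1) \<notin> E" using local_edges(3) nodes_distinct distinct by auto
  have "card (preds E' w) = card (preds E w)"
  proof (cases "w = n2")
    case True
    have "card (insert v (preds E n2 - {x})) = card (preds E n2)"
      by (rule card_insert_remove_eq[OF finite_preds[OF fin]]) (use edges(3) fresh_no_edges in auto)
    with True show ?thesis using preds_uncross[OF assms] by simp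
  next
    case False
    have "card (insert x (preds E n1 - {y})) = card (preds E n1)"
      by (rule card_insert_remove_eq[OF finite_preds[OF fin]]) (use edges(4) \<open>(x, n1) \<notin> E\<close> in auto)
    with False show ?thesis using preds_uncross[OF assms] by simp
  qed
  then show "indeg E' w = indeg E w" unfolding indeg_def .
  have "card (succs E' w) = card (succs E w)"
  proof (cases "w = x")
    case True
    have "card {v, n1} = card {y, n2}" using fresh_distinct nodes_distinct distinct by simp
    with True show ?thesis using succs_uncross[OF assms] local_structure(4) by simp
  next
    case False
    have "card (insert v (succs E p - {y})) = card (succs E p)"
      by (rule card_insert_remove_eq[OF finite_succs[OF fin]]) (use edges(1) fresh_no_edges in auto)
    with False show ?thesis using succs_uncross[OF assms] by simp
  qed
  then show "outdeg E' w = outdeg E w" unfolding outdeg_def .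
qed

lemma degrees_fresh: "indeg E' v = 2" "outdeg E' v = 1" "v \<in> verts E'"
proof -
  have "preds E' v = {x, p}" "succs E' v = {n2}"
    unfolding uncross_def using fresh_no_edges fresh_distinct by auto
  then show "indeg E' v = 2" "outdeg E' v = 1"
    unfolding indeg_def outdeg_def using distinct(1) by auto
  show "v \<in> verts E'" unfolding uncross_def verts_def by force
qed

lemma suppressed_not_in_verts: "y \<notin> verts E'"
  unfolding uncross_def verts_def using local_edges(1,2) nodes_distinct fresh_distinct by force

text \<open>Mapping v back to the suppressed node y turns every edge of the new network into a path of
  the old one.\<close>

lemma acyclic_uncross: "acyclic E'"
proof (rule acyclic_if_edges_map_to_paths[OF phylo_net_acyclic[OF net]])
  fix s t assume "(s, t) \<in> E'"
  then consider "(s, t) \<in> E" "s \<noteq> v" "t \<noteq> v" | "s = x" "t = v" | "s = v" "t = n2"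
    | "s = x" "t = n1" | "s = p" "t = v"
    unfolding uncross_def using fresh_no_edges by blast
  then show "((\<lambda>w. if w = v then y else w) s, (\<lambda>w. if w = v then y else w) t) \<in> E\<^sup>+"
  proof cases
    case 1
    then show ?thesis by simp
  next
    case 2
    then show ?thesis using fresh_distinct(2) r_into_trancl[OF edges(2)] by simp
  next
    case 3
    then show ?thesis using fresh_distinct(5) path by simp
  next
    case 4
    have "(x, n1) \<in> E\<^sup>+" using edges(2,4) by (rule trancl_into_trancl[OF r_into_trancl])
    with 4 show ?thesis using fresh_distinct(2,4) by simp
  next
    case 5
    then show ?thesis using fresh_distinct(1) r_into_trancl[OF edges(1)] by simp
  qed
qed

lemma verts_uncross: "w \<noteq> v \<Longrightarrow> w \<noteq> y \<Longrightarrow> w \<in> verts E' \<longleftrightarrow> w \<in> verts E"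
proof -
  have "finite E'" unfolding uncross_def using phylo_net_finite[OF net] by simp
  then show "w \<noteq> v \<Longrightarrow> w \<noteq> y \<Longrightarrow> w \<in> verts E' \<longleftrightarrow> w \<in> verts E"
    using in_verts_iff_degree phylo_net_finite[OF net] degrees_uncross by metis
qed

lemma node_kinds_uncross:
  assumes "w \<noteq> v" "w \<noteq> y"
  shows "is_root E' w \<longleftrightarrow> is_root E w" "is_leaf E' w \<longleftrightarrow> is_leaf E w"
    "is_split E' w \<longleftrightarrow> is_split E w" "is_ret E' w \<longleftrightarrow> is_ret E w"
  unfolding is_root_def is_leaf_def is_split_def is_ret_def
  using verts_uncross[OF assms] degrees_uncross[OF assms] by simp_all

lemma roots_leaves_uncross: "is_root E' w \<longleftrightarrow> is_root E w" "is_leaf E' w \<longleftrightarrow> is_leaf E w"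
proof -
  have "\<not> is_root E' w \<and> \<not> is_root E w \<and> \<not> is_leaf E' w \<and> \<not> is_leaf E w" if "w = v \<or> w = y"
    using that degrees_fresh suppressed_not_in_verts fresh local_structure(3)
    unfolding is_root_def is_leaf_def by auto
  then show "is_root E' w \<longleftrightarrow> is_root E w" "is_leaf E' w \<longleftrightarrow> is_leaf E w"
    using node_kinds_uncross by blast+
qed

lemma phylo_net_uncross: "phylo_net X lab E'"
proof -
  have "is_root E' w \<or> is_leaf E' w \<or> is_split E' w \<or> is_ret E' w" if w: "w \<in> verts E'" for w
  proof (cases "w = v")
    case True
    then show ?thesis unfolding is_ret_def using degrees_fresh by simp
  next
    case False
    with w suppressed_not_in_verts have "w \<noteq> y" by blast
    with False w verts_uncross have "w \<in> verts E" by blast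
    with net have "is_root E w \<or> is_leaf E w \<or> is_split E w \<or> is_ret E w"
      unfolding phylo_net_def by blast
    with node_kinds_uncross[OF False \<open>w \<noteq> y\<close>] show ?thesis by blast
  qed
  moreover have "finite E'" unfolding uncross_def using phylo_net_finite[OF net] by simp
  moreover have "Collect (is_root E') = Collect (is_root E)" "Collect (is_leaf E') = Collect (is_leaf E)"
    using roots_leaves_uncross by auto
  ultimately show ?thesis
    using net acyclic_uncross unfolding phylo_net_def by simp
qed

lemma valid_head_move_uncross: "valid_head_move X lab E E'"
  unfolding valid_head_move_def using head_move phylo_net_uncross by blast

lemma out_edges_uncross:
  assumes "p \<notin> R" "x \<notin> R" "y \<notin> R" "v \<notin> R"
  shows "{e \<in> E'. fst e \<in> R} = {e \<in> E. fst e \<in> R}"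
  unfolding uncross_def using assms by auto

lemma edge_kept: "(s, t) \<in> E \<Longrightarrow> s \<noteq> x \<Longrightarrow> s \<noteq> y \<Longrightarrow> t \<noteq> y \<Longrightarrow> (s, t) \<in> E'"
  unfolding uncross_def by auto

lemma edge_redirected: "(s, y) \<in> E \<Longrightarrow> s \<noteq> x \<Longrightarrow> (s, v) \<in> E'"
  unfolding uncross_def using local_edges(1) by auto

lemma edges_new: "(x, v) \<in> E'" "(x, n1) \<in> E'" "(v, n2) \<in> E'"
  unfolding uncross_def by auto
end

locale crossed_ladder =
  fixes X :: "'x set" and lab :: "'v \<Rightarrow> 'x" and E :: "('v \<times> 'v) set"
    and k :: nat and a b :: "nat \<Rightarrow> 'v" and r c p v :: 'v and i :: nat
  assumes net: "phylo_net X lab E"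
    and ladder: "ladder E k a b r c"
    and level: "i \<in> {1..<k}"
    and crossed: "crossed E a b i"
    and parent: "p \<in> above_rung c a b i" "(p, b i) \<in> E"
    and fresh: "v \<notin> verts E"
begin

lemma levels: "i \<in> {1..k}" "i + 1 \<in> {1..k}"
  using level by auto

sublocale rung_uncrossing X lab E p "a i" "b i" "a (i + 1)" "b (i + 1)" v
proof
  note L = ladderD[OF ladder]
  show "phylo_net X lab E" by (rule net)
  show "(p, b i) \<in> E" by (rule parent(2))
  show "(a i, b i) \<in> E" by (rule L(10)[OF levels(1)])
  show "(a i, b (i + 1)) \<in> E" "(b i, a (i + 1)) \<in> E" using crossed unfolding crossed_def by blast+
  then show "(b i, b (i + 1)) \<in> E\<^sup>+" using L(10)[OF levels(2)] by (meson r_into_trancl trancl_into_trancl)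
  show "p \<noteq> a i" using parent(1) ladder_not_above(1)[OF ladder levels(1)] by blast
  show "a (i + 1) \<noteq> b (i + 1)" using ladder_distinct(3)[OF ladder levels(2) levels(2)] .
  show "v \<notin> verts E" by (rule fresh)
qed

lemma other_level_distinct:
  assumes "j \<in> {1..k}" "j \<noteq> i"
  shows "a j \<noteq> a i" "a j \<noteq> b i" "b j \<noteq> a i" "b j \<noteq> b i"
  using ladder_distinct(1,2,3)[OF ladder assms(1) levels(1)] ladder_distinct(3)[OF ladder levels(1) assms(1)]
    assms(2) by auto

lemma rung_distinct: "a i \<noteq> b i"
  using ladder_distinct(3)[OF ladder levels(1) levels(1)] .

lemma straight_kept:
  assumes j: "j \<in> {1..<k}" "j \<noteq> i" and "straight E a b j"
  shows "straight E' a (b(i := v)) j"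
proof -
  have jj: "j \<in> {1..k}" "j + 1 \<in> {1..k}" using j(1) by auto
  have e: "(a j, a (j + 1)) \<in> E" "(b j, b (j + 1)) \<in> E" using assms(3) unfolding straight_def by auto
  note sources = other_level_distinct[OF jj(1) j(2)]
  show ?thesis
  proof (cases "j + 1 = i")
    case True
    then show ?thesis unfolding straight_def
      using edge_kept[OF e(1)] edge_redirected[of "b j"] e(2) sources rung_distinct j(2) by auto
  next
    case False
    with other_level_distinct[OF jj(2)] show ?thesis unfolding straight_def
      using edge_kept[OF e(1)] edge_kept[OF e(2)] sources by auto
  qed
qed

lemma crossed_kept:
  assumes j: "j \<in> {1..<k}" "j \<noteq> i" and "crossed E a b j"
  shows "crossed E' a (b(i := v)) j"
proof -
  have jj: "j \<in> {1..k}" "j + 1 \<in> {1..k}" using j(1) by auto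
  have e: "(a j, b (j + 1)) \<in> E" "(b j, a (j + 1)) \<in> E" using assms(3) unfolding crossed_def by auto
  note sources = other_level_distinct[OF jj(1) j(2)]
  show ?thesis
  proof (cases "j + 1 = i")
    case True
    then show ?thesis unfolding crossed_def
      using edge_kept[OF e(2)] edge_redirected[of "a j"] e(1) sources rung_distinct j(2) by auto
  next
    case False
    with other_level_distinct[OF jj(2)] show ?thesis unfolding crossed_def
      using edge_kept[OF e(1)] edge_kept[OF e(2)] sources by auto
  qed
qed

lemma level_straightened: "straight E' a (b(i := v)) i"
  unfolding straight_def using edges_new(2,3) by simp

lemma top_edges_uncross: "(r, c) \<in> E'" "(c, a 1) \<in> E'" "(c, (b(i := v)) 1) \<in> E'"
proof -
  note L = ladderD[OF ladder] and N = ladder_distinct[OF ladder]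
  have one: "1 \<in> {1..k}" using level by auto
  have "a i \<noteq> r" "b i \<noteq> r"
    using root_has_no_pred[OF net L(1)] L(10)[OF levels(1)] ladder_parents_above(1)[OF ladder levels(1)]
    by blast+
  then show "(r, c) \<in> E'"
    by (intro edge_kept[OF L(2)]) (use N(5)[OF levels(1) levels(1)] in auto)
  show "(c, a 1) \<in> E'"
    by (rule edge_kept[OF L(3)])
      (use N(4,5)[OF levels(1) levels(1)] N(3)[OF one levels(1)] in auto)
  show "(c, (b(i := v)) 1) \<in> E'"
  proof (cases "i = 1")
    case True
    then show ?thesis using edge_redirected[of c] L(4) N(4)[OF one one] by simp
  next
    case False
    have "(c, b 1) \<in> E'"
      by (rule edge_kept[OF L(4)])
        (use False N(4,5)[OF levels(1) levels(1)] N(2)[OF one levels(1)] in auto)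
    with False show ?thesis by simp
  qed
qed

lemma rungs_uncross: "j \<in> {1..k} \<Longrightarrow> (a j, (b(i := v)) j) \<in> E'"
proof (cases "j = i")
  case True
  then show ?thesis using edges_new(1) by simp
next
  case False
  assume j: "j \<in> {1..k}"
  have "(a j, b j) \<in> E'"
    by (rule edge_kept[OF ladderD(10)[OF ladder j]]) (use other_level_distinct[OF j False] in auto)
  with False show ?thesis by simp
qed

lemma ladder_uncross: "ladder E' k a (b(i := v)) r c"
proof -
  note L = ladderD[OF ladder]
  have v_new: "v \<notin> a ` {1..k}" "v \<notin> b ` {1..k}" "v \<noteq> c"
    using fresh edge_in_verts[OF L(10)] edge_in_verts[OF L(2)] by blast+
  have inj: "inj_on (b(i := v)) {1..k}" by (rule inj_on_fun_updI[OF L(6) v_new(2)])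
  have sub: "(b(i := v)) ` {1..k} \<subseteq> insert v (b ` {1..k})" by auto
  have "a ` {1..k} \<inter> insert v (b ` {1..k}) = {}" using L(7) v_new(1) by auto
  with sub have disj: "a ` {1..k} \<inter> (b(i := v)) ` {1..k} = {}" by auto
  have c_new: "c \<notin> (b(i := v)) ` {1..k}"
  proof
    assume "c \<in> (b(i := v)) ` {1..k}"
    with sub have "c \<in> insert v (b ` {1..k})" by (rule subsetD)
    with L(9) v_new(3) show False by simp
  qed
  have levels_ok: "straight E' a (b(i := v)) j \<or> crossed E' a (b(i := v)) j" if "j \<in> {1..<k}" for j
  proof (cases "j = i")
    case True
    with level_straightened show ?thesis by simp
  next
    case False
    with straight_kept[OF that] crossed_kept[OF that] L(11)[OF that] show ?thesis by blast
  qed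
  show ?thesis
    unfolding ladder_def using roots_leaves_uncross(1) L(1,5,8) top_edges_uncross inj disj c_new
      rungs_uncross levels_ok by simp
qed

lemma below_last_rung_untouched:
  "{e \<in> E'. fst e \<in> E\<^sup>* `` {a k, b k}} = {e \<in> E. fst e \<in> E\<^sup>* `` {a k, b k}}"
proof (rule out_edges_uncross)
  have "p \<in> above_rung c a b k" "a i \<in> above_rung c a b k" "b i \<in> above_rung c a b k"
    using parent(1) above_rung_mono[of i k c a b] level unfolding above_rung_def by auto
  then show "p \<notin> E\<^sup>* `` {a k, b k}" "a i \<notin> E\<^sup>* `` {a k, b k}" "b i \<notin> E\<^sup>* `` {a k, b k}"
    using ladder_top_not_below_last_rung[OF net ladder] level by auto
  have "a k \<in> verts E" "b k \<in> verts E"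
    using edge_in_verts[OF ladderD(10)[OF ladder]] level by auto
  then show "v \<notin> E\<^sup>* `` {a k, b k}"
    using fresh_no_edges(1) fresh by (auto elim: rtranclE)
qed

end

section \<open>Straightening the whole ladder\<close>

definition crossings :: "('v \<times> 'v) set \<Rightarrow> nat \<Rightarrow> (nat \<Rightarrow> 'v) \<Rightarrow> (nat \<Rightarrow> 'v) \<Rightarrow> nat set" where
  "crossings E k a b = {j \<in> {1..<k}. \<not> straight E a b j}"

lemma uncross_one_crossing:
  fixes E :: "('v \<times> 'v) set"
  assumes inf: "infinite (UNIV :: 'v set)" and net: "phylo_net X lab E"
    and lad: "ladder E k a b r c" and i: "i \<in> crossings E k a b"
  shows "\<exists>E' b'. valid_head_move X lab E E' \<and> ladder E' k a b' r c \<and> b' k = b k \<and>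
    crossings E' k a b' \<subset> crossings E k a b \<and>
    {e \<in> E'. fst e \<in> E\<^sup>* `` {a k, b k}} = {e \<in> E. fst e \<in> E\<^sup>* `` {a k, b k}}"
proof -
  have level: "i \<in> {1..<k}" and "\<not> straight E a b i" using i unfolding crossings_def by auto
  with ladderD(11)[OF lad] have "crossed E a b i" by blast
  moreover have "i \<in> {1..k}" using level by simp
  then obtain p where "p \<in> above_rung c a b i" "(p, b i) \<in> E"
    using ladder_parents_above(2)[OF lad] by blast
  moreover have "finite (verts E)" using phylo_net_finite[OF net] unfolding verts_def by simp
  then obtain v :: 'v where "v \<notin> verts E" using ex_new_if_finite[OF inf] by blast
  ultimately interpret crossed_ladder X lab E k a b r c p v i
    using net lad level by unfold_locales
  have "crossings E' k a (b(i := v)) \<subseteq> crossings E k a b - {i}"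
  proof
    fix j assume "j \<in> crossings E' k a (b(i := v))"
    then have j: "j \<in> {1..<k}" "\<not> straight E' a (b(i := v)) j" unfolding crossings_def by auto
    with level_straightened have "j \<noteq> i" by blast
    with j straight_kept have "\<not> straight E a b j" by blast
    with j \<open>j \<noteq> i\<close> show "j \<in> crossings E k a b - {i}" unfolding crossings_def by blast
  qed
  with i have "crossings E' k a (b(i := v)) \<subset> crossings E k a b" by blast
  moreover have "(b(i := v)) k = b k" using level by simp
  ultimately show ?thesis
    using valid_head_move_uncross ladder_uncross below_last_rung_untouched by blast
qed

abbreviation head_moves :: "'x set \<Rightarrow> ('v \<Rightarrow> 'x) \<Rightarrow> (('v \<times> 'v) set \<times> ('v \<times> 'v) set) set" where
  "head_moves X lab \<equiv> {(F, F'). valid_head_move X lab F F'}"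

lemma straighten_ladder:
  fixes E :: "('v \<times> 'v) set"
  assumes inf: "infinite (UNIV :: 'v set)"
  shows "phylo_net X lab E \<Longrightarrow> ladder E k a b r c \<Longrightarrow>
    \<exists>n \<le> card (crossings E k a b). \<exists>E' b'. (E, E') \<in> head_moves X lab ^^ n \<and>
      rets_neatly_at_top E' k a b' \<and> b' k = b k \<and>
      {e \<in> E'. fst e \<in> E\<^sup>* `` {a k, b k}} = {e \<in> E. fst e \<in> E\<^sup>* `` {a k, b k}}"
proof (induction "card (crossings E k a b)" arbitrary: E b rule: less_induct)
  case less
  show ?case
  proof (cases "crossings E k a b = {}")
    case True
    then have "rets_neatly_at_top E k a b"
      using rets_neatly_at_top_if_straight[OF less.prems(2)] unfolding crossings_def by blast
    then show ?thesis by force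
  next
    case False
    then obtain i where "i \<in> crossings E k a b" by blast
    from uncross_one_crossing[OF inf less.prems this] obtain E1 b1 where
      move: "valid_head_move X lab E E1" and lad1: "ladder E1 k a b1 r c" and b1: "b1 k = b k"
      and fewer: "crossings E1 k a b1 \<subset> crossings E k a b"
      and below1: "{e \<in> E1. fst e \<in> E\<^sup>* `` {a k, b k}} = {e \<in> E. fst e \<in> E\<^sup>* `` {a k, b k}}"
      by blast
    have less_card: "card (crossings E1 k a b1) < card (crossings E k a b)"
      by (rule psubset_card_mono[OF _ fewer]) (simp add: crossings_def)
    have net1: "phylo_net X lab E1" using move unfolding valid_head_move_def by blast
    obtain n E' b' where n: "n \<le> card (crossings E1 k a b1)" and moves: "(E1, E') \<in> head_moves X lab ^^ n"
      and neat: "rets_neatly_at_top E' k a b'" and b': "b' k = b1 k"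
      and below': "{e \<in> E'. fst e \<in> E1\<^sup>* `` {a k, b1 k}} = {e \<in> E1. fst e \<in> E1\<^sup>* `` {a k, b1 k}}"
      using less.hyps[OF less_card net1 lad1] by blast
    have "E1\<^sup>* `` {a k, b k} = E\<^sup>* `` {a k, b k}" by (rule rtrancl_Image_eq_if_out_edges_eq[OF below1])
    with below' below1 b1 have "{e \<in> E'. fst e \<in> E\<^sup>* `` {a k, b k}} = {e \<in> E. fst e \<in> E\<^sup>* `` {a k, b k}}"
      by simp
    moreover have "(E, E') \<in> head_moves X lab ^^ Suc n" using move moves by (blast intro: relpow_Suc_I2)
    moreover have "Suc n \<le> card (crossings E k a b)" using n less_card by simp
    ultimately show ?thesis using neat b' b1 by metis
  qed
qed

lemma below_eq_rtrancl_Image: "below E x y = E\<^sup>* `` {x, y} - {x, y}"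
  unfolding below_def by (auto simp: rtrancl_eq_or_trancl)

lemma below_eq_if_out_edges_eq:
  assumes "{e \<in> E'. fst e \<in> E\<^sup>* `` {x, y}} = {e \<in> E. fst e \<in> E\<^sup>* `` {x, y}}"
  shows "below E' x y = below E x y"
    and "{e \<in> E'. fst e \<in> below E x y} = {e \<in> E. fst e \<in> below E x y}"
proof -
  show "below E' x y = below E x y"
    unfolding below_eq_rtrancl_Image rtrancl_Image_eq_if_out_edges_eq[OF assms] ..
  have "below E x y \<subseteq> E\<^sup>* `` {x, y}" unfolding below_eq_rtrancl_Image by blast
  with assms show "{e \<in> E'. fst e \<in> below E x y} = {e \<in> E. fst e \<in> below E x y}"
    by (rule restrict_out_edges)
qed

theorem mainTheorem19:
  fixes X :: "'x set" and lab :: "'v \<Rightarrow> 'x" and E :: "('v \<times> 'v) set"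
    and k :: nat and a b :: "nat \<Rightarrow> 'v"
  assumes "infinite (UNIV :: 'v set)"
    and "phylo_net X lab E"
    and "1 \<le> k"
    and "rets_at_top E k a b"
  shows "\<exists>n \<le> k. \<exists>Es :: nat \<Rightarrow> ('v \<times> 'v) set.
           Es 0 = E \<and> (\<forall>i < n. valid_head_move X lab (Es i) (Es (Suc i))) \<and>
           (\<exists>a' b'. rets_neatly_at_top (Es n) k a' b' \<and>
              below (Es n) (a' k) (b' k) = below E (a k) (b k) \<and>
              {e \<in> Es n. fst e \<in> below E (a k) (b k)} = {e \<in> E. fst e \<in> below E (a k) (b k)})"
proof -
  obtain r c where "ladder E k a b r c" using assms(4) unfolding rets_at_top_iff_ladder by blast
  from straighten_ladder[OF assms(1,2) this] obtain n E' b' where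
    n: "n \<le> card (crossings E k a b)" and moves: "(E, E') \<in> head_moves X lab ^^ n"
    and neat: "rets_neatly_at_top E' k a b'" and "b' k = b k"
    and untouched: "{e \<in> E'. fst e \<in> E\<^sup>* `` {a k, b k}} = {e \<in> E. fst e \<in> E\<^sup>* `` {a k, b k}}"
    by blast
  have "card (crossings E k a b) \<le> card {1..<k}"
    by (rule card_mono) (auto simp: crossings_def)
  with n have "n \<le> k" by simp
  obtain Es where Es: "Es 0 = E" "Es n = E'" "\<forall>i < n. valid_head_move X lab (Es i) (Es (Suc i))"
    using moves unfolding relpow_fun_conv by auto
  have "rets_neatly_at_top (Es n) k a b' \<and> below (Es n) (a k) (b' k) = below E (a k) (b k) \<and>
      {e \<in> Es n. fst e \<in> below E (a k) (b k)} = {e \<in> E. fst e \<in> below E (a k) (b k)}"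
    using Es(2) neat below_eq_if_out_edges_eq[OF untouched] \<open>b' k = b k\<close> by simp
  with \<open>n \<le> k\<close> Es(1,3) show ?thesis by blast
qed

end
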